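(* Let $N$ be a finite set and $g\colon 2^N\to\mathbb{R}_{\ge0}$ a set function that is monotone ($g(R)\le g(Q)$ for $R\subseteq Q$) and supermodular ($g(R\cup\{x\})-g(R)\le g(Q\cup\{x\})-g(Q)$ for $R\subseteq Q\subseteq N$, $x\notin Q$). Define $v\colon 2^N\to\mathbb{R}$ by $$v(S)=g(S)+\sum_{j\in S}\big(g(S)-g(\{j\})\big).$$ Then $v$ is supermodular: $v(R\cup\{i\})-v(R)\le v(Q\cup\{i\})-v(Q)$ for all $R\subseteq Q\subseteq N$ and $i\notin Q$.
   Context: In the paper $g(S)=\mathcal{G}(V, f_S)$ is the performance (e.g. accuracy) on the common validation data $V$ of the model $f_S$ trained on the pooled training data of the parties in $S$; $v$ is the single-validation-task characteristic function. *)

theory Defs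
  imports Complex_Main
begin

definition v_of :: "('a set \<Rightarrow> real) \<Rightarrow> 'a set \<Rightarrow> real" where
  "v_of g S = g S + (\<Sum>j\<in>S. g S - g {j})"

end

theory Submission
  imports Defs
begin

text \<open>Writing \<open>v(S) = (|S| + 1) g(S) - \<Sum>\<^sub>j\<^sub>\<in>\<^sub>S g{j}\<close>, the marginal contribution of \<open>i\<close> to \<open>v\<close> at \<open>S\<close>
  is \<open>(|S| + 1)\<close> times the marginal of \<open>g\<close>, plus \<open>g(S \<union> {i}) - g{i}\<close>. Supermodularity makes the
  marginal of \<open>g\<close> grow with \<open>S\<close>, monotonicity makes it nonnegative (so the growing weight
  \<open>|S| + 1\<close> only helps) and makes \<open>g(S \<union> {i})\<close> grow with \<open>S\<close>.\<close>

lemma v_of_eq_card_weighted: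
  "v_of g S = (real (card S) + 1) * g S - (\<Sum>j\<in>S. g {j})"
  unfolding v_of_def by (simp add: sum_subtractf algebra_simps)

lemma v_of_insert_diff:
  assumes "finite S" "i \<notin> S"
  shows "v_of g (insert i S) - v_of g S
         = (real (card S) + 1) * (g (insert i S) - g S) + g (insert i S) - g {i}"
  using assms by (simp add: v_of_eq_card_weighted algebra_simps)

lemma card_weighted_marginal_mono:
  fixes a b :: real
  assumes "finite Q" "R \<subseteq> Q" "0 \<le> a" "a \<le> b"
  shows "(real (card R) + 1) * a \<le> (real (card Q) + 1) * b"
  using assms card_mono[OF assms(1,2)] by (intro mult_mono) auto

theorem mainTheorem4:
  fixes N :: "'a set" and g :: "'a set \<Rightarrow> real"
  assumes finN: "finite N"
    and nonneg: "\<And>S. S \<subseteq> N \<Longrightarrow> g S \<ge> 0"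
    and mono: "\<And>R Q. R \<subseteq> Q \<Longrightarrow> Q \<subseteq> N \<Longrightarrow> g R \<le> g Q"
    and supermod: "\<And>R Q x. R \<subseteq> Q \<Longrightarrow> Q \<subseteq> N \<Longrightarrow> x \<in> N \<Longrightarrow> x \<notin> Q \<Longrightarrow>
                      g (insert x R) - g R \<le> g (insert x Q) - g Q"
  shows "\<And>R Q i. R \<subseteq> Q \<Longrightarrow> Q \<subseteq> N \<Longrightarrow> i \<in> N \<Longrightarrow> i \<notin> Q \<Longrightarrow>
           v_of g (insert i R) - v_of g R \<le> v_of g (insert i Q) - v_of g Q"
proof -
  fix R Q i
  assume RQ: "R \<subseteq> Q" and QN: "Q \<subseteq> N" and iN: "i \<in> N" and iQ: "i \<notin> Q"
  have finQ: "finite Q" using finN QN finite_subset by blast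
  have finR: "finite R" using finQ RQ finite_subset by blast
  have iR: "i \<notin> R" using iQ RQ by blast
  have marginal_nonneg: "0 \<le> g (insert i R) - g R"
    using mono[of R "insert i R"] QN RQ iN by auto
  have marginal_le: "g (insert i R) - g R \<le> g (insert i Q) - g Q"
    using supermod RQ QN iN iQ by blast
  have insert_le: "g (insert i R) \<le> g (insert i Q)"
    using mono[of "insert i R" "insert i Q"] RQ QN iN by auto
  have "(real (card R) + 1) * (g (insert i R) - g R) \<le> (real (card Q) + 1) * (g (insert i Q) - g Q)"
    using card_weighted_marginal_mono[OF finQ RQ marginal_nonneg marginal_le] .
  then show "v_of g (insert i R) - v_of g R \<le> v_of g (insert i Q) - v_of g Q"
    unfolding v_of_insert_diff[OF finR iR] v_of_insert_diff[OF finQ iQ] using insert_le by linarith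
qed

end
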